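(* Let $W_0\in\mathcal{W}$ and let $W(t)$ be the solution of the assignment flow $\dot W=\Pi_W\big(S(W)\big)$ with initial value $W(0)=W_0$. Then $W(t)$ admits the representation $$W(t)=\exp_{W_0}\big(V(t)\big),$$ where $V(t)\in\mathcal{T}_0$ solves $$\dot V=\Pi_{\mathcal{T}_0}\,S\big(\exp_{W_0}(V)\big),\qquad V(0)=0 .$$
   Context: Let $G=(I,E)$ be a finite undirected graph with neighborhoods $\mathcal{N}_i=\{k\in I: ik\in E\}$, and weights $w_{ik}>0$ with $\sum_{k\in\mathcal{N}_i}w_{ik}=1$ for all $i\in I$. Let $J$ be a finite label set. All operations on vectors (products, quotients, $\log$, $e^{(\cdot)}$) are componentwise. Simplex and tangent space: $\mathcal{S}=\{p\in\mathbb{R}^{|J|}: p_j>0,\ \langle\mathbb{1},p\rangle=1\}$ and $T_0=\{v\in\mathbb{R}^{|J|}:\langle\mathbb{1},v\rangle=0\}$. Write $\mathbb{1}_{\mathcal{S}}=\frac{1}{|J|}\mathbb{1}$. Define $\Pi_{T_0}(z)=z-\langle\mathbb{1}_{\mathcal{S}},z\rangle\mathbb{1}$, and for $p\in\mathcal{S}$, $\Pi_p(z)=(\mathrm{Diag}(p)-pp^\top)z$. Define $\exp_p:\mathbb{R}^{|J|}\to\mathcal{S}$, $\exp_p(z)=\frac{p\,e^{z}}{\langle p,e^{z}\rangle}$. Assignment manifold $\mathcal{W}=\mathcal{S}^{|I|}$ with points $W=(W_i)_{i\in I}$, $W_i\in\mathcal{S}$; $\mathcal{T}_0=T_0^{|I|}$.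 The maps $\Pi_{\mathcal{T}_0}$, $\Pi_W$, $\exp_W$ act blockwise: $(\Pi_{\mathcal{T}_0}Z)_i=\Pi_{T_0}Z_i$, $(\Pi_W Z)_i=\Pi_{W_i}Z_i$, $(\exp_W Z)_i=\exp_{W_i}(Z_i)$ for $Z=(Z_i)_{i\in I}\in\mathbb{R}^{|I||J|}$. Given distance vectors $D_i\in\mathbb{R}^{|J|}$ ($i\in I$) and $\rho>0$, the likelihood vectors are $L_i(W_i)=\frac{W_i e^{-D_i/\rho}}{\langle W_i,e^{-D_i/\rho}\rangle}$. For $W\in\mathcal{W}$ the geometric mean is $\mathcal{G}^w_i(W)=\exp_{W_i}\Big(\log\frac{\prod_{k\in\mathcal{N}_i}W_k^{w_{ik}}}{W_i}\Big)$, and the similarity vectors are $S_i(W)=\mathcal{G}^w_i\big(L(W)\big)$ with $L(W)=(L_i(W_i))_{i\in I}$; $S(W)=(S_i(W))_{i\in I}\in\mathcal{W}$. *)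

theory Defs
  imports "HOL-Analysis.Analysis"
begin

text \<open>Vectors over the label set J are modelled as real^'j, points of the assignment
manifold (and elements of R^{|I||J|}) as real^'j^'i, with W$i the block W_i.\<close>

definition simplexS :: "real^'j \<Rightarrow> bool" where
  "simplexS p \<longleftrightarrow> (\<forall>j. p$j > 0) \<and> (\<Sum>j\<in>UNIV. p$j) = 1"

definition tangentT0 :: "real^'j \<Rightarrow> bool" where
  "tangentT0 v \<longleftrightarrow> (\<Sum>j\<in>UNIV. v$j) = 0"

definition PiT0 :: "real^'j \<Rightarrow> real^'j" where
  "PiT0 z = (\<chi> j. z$j - (\<Sum>k\<in>UNIV. z$k / real CARD('j)))"

definition Pip :: "real^'j \<Rightarrow> real^'j \<Rightarrow> real^'j" where
  "Pip p z = (\<chi> j. p$j * z$j - p$j * (\<Sum>k\<in>UNIV. p$k * z$k))"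

definition expS :: "real^'j \<Rightarrow> real^'j \<Rightarrow> real^'j" where
  "expS p z = (\<chi> j. p$j * exp (z$j) / (\<Sum>k\<in>UNIV. p$k * exp (z$k)))"

definition assignW :: "real^'j^'i \<Rightarrow> bool" where
  "assignW W \<longleftrightarrow> (\<forall>i. simplexS (W$i))"

definition tangentTT0 :: "real^'j^'i \<Rightarrow> bool" where
  "tangentTT0 V \<longleftrightarrow> (\<forall>i. tangentT0 (V$i))"

definition PiTT0 :: "real^'j^'i \<Rightarrow> real^'j^'i" where
  "PiTT0 Z = (\<chi> i. PiT0 (Z$i))"

definition PiW :: "real^'j^'i \<Rightarrow> real^'j^'i \<Rightarrow> real^'j^'i" where
  "PiW W Z = (\<chi> i. Pip (W$i) (Z$i))"

definition expW :: "real^'j^'i \<Rightarrow> real^'j^'i \<Rightarrow> real^'j^'i" where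
  "expW W Z = (\<chi> i. expS (W$i) (Z$i))"

definition likelihood :: "real^'j^'i \<Rightarrow> real \<Rightarrow> real^'j^'i \<Rightarrow> real^'j^'i" where
  "likelihood D \<rho> W = (\<chi> i. (\<chi> j. W$i$j * exp (- D$i$j / \<rho>)
       / (\<Sum>k\<in>UNIV. W$i$k * exp (- D$i$k / \<rho>))))"

definition geomean :: "('i \<Rightarrow> 'i set) \<Rightarrow> ('i \<Rightarrow> 'i \<Rightarrow> real) \<Rightarrow> real^'j^'i \<Rightarrow> 'i \<Rightarrow> real^'j" where
  "geomean N w W i = expS (W$i)
      (\<chi> j. ln ((\<Prod>k\<in>N i. (W$k$j) powr (w i k)) / W$i$j))"

definition similarity :: "('i \<Rightarrow> 'i set) \<Rightarrow> ('i \<Rightarrow> 'i \<Rightarrow> real) \<Rightarrow> real^'j^'i \<Rightarrow> real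
     \<Rightarrow> real^'j^'i \<Rightarrow> real^'j^'i" where
  "similarity N w D \<rho> W = (\<chi> i. geomean N w (likelihood D \<rho> W) i)"

end

theory Submission
  imports Defs
begin

text \<open>Take \<open>V(t) = \<Pi>\<^sub>T\<^sub>0 (log W(t) - log W\<^sub>0)\<close>. Since \<open>exp\<^sub>p\<close> is invariant under adding a
  constant to its argument and \<open>W(t)\<close> is normalized, \<open>exp\<^sub>W\<^sub>0 (V(t)) = W(t)\<close>. Along the flow,
  \<open>d/dt log W\<^sub>i = \<Pi>\<^sub>W\<^sub>i(S\<^sub>i) / W\<^sub>i = S\<^sub>i - \<langle>W\<^sub>i, S\<^sub>i\<rangle> \<one>\<close>, and the linear map \<open>\<Pi>\<^sub>T\<^sub>0\<close> annihilates the
  constant vector, so \<open>V' = \<Pi>\<^sub>T\<^sub>0 S(W) = \<Pi>\<^sub>T\<^sub>0 S(exp\<^sub>W\<^sub>0 V)\<close>.\<close>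

lemma vec_lambda_has_vector_derivative:
  fixes f :: "'n::finite \<Rightarrow> real \<Rightarrow> 'a::real_normed_vector"
  assumes "\<And>i. (f i has_vector_derivative f' i) F"
  shows "((\<lambda>t. \<chi> i. f i t) has_vector_derivative (\<chi> i. f' i)) F"
proof -
  let ?q = "\<lambda>i y. ((f i y - f i (netlimit F)) - (y - netlimit F) *\<^sub>R f' i) /\<^sub>R norm (y - netlimit F)"
  have "\<And>i. (?q i \<longlongrightarrow> 0) F"
    using assms unfolding has_vector_derivative_def has_derivative_def by blast
  then have "((\<lambda>y. \<chi> i. ?q i y) \<longlongrightarrow> (\<chi> i. 0)) F"
    by (rule tendsto_vec_lambda)
  moreover have "(\<lambda>y. \<chi> i. ?q i y) = (\<lambda>y. (((\<chi> i. f i y) - (\<chi> i. f i (netlimit F)))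
      - (y - netlimit F) *\<^sub>R (\<chi> i. f' i)) /\<^sub>R norm (y - netlimit F))"
    by (auto simp: vec_eq_iff)
  moreover have "(\<chi> i. 0) = (0::'a^'n)"
    by (simp add: vec_eq_iff)
  ultimately show ?thesis
    unfolding has_vector_derivative_def has_derivative_def
    using bounded_linear_scaleR_left by simp
qed

lemma has_vector_derivative_vec_nth:
  "(f has_vector_derivative f') F \<Longrightarrow> ((\<lambda>t. f t $ i) has_vector_derivative f' $ i) F"
  using bounded_linear.has_vector_derivative[OF bounded_linear_vec_nth] .

lemma has_real_derivative_ln_of_relative_rate:
  assumes "(x has_real_derivative x t * r) (at t within T)" and "x t > 0"
  shows "((\<lambda>s. ln (x s)) has_real_derivative r) (at t within T)"
proof -
  have "((\<lambda>s. ln (x s)) has_real_derivative (x t * r) / x t) (at t within T)"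
    by (rule derivative_eq_intros assms refl | use assms(2) in simp)+
  then show ?thesis
    using assms(2) by simp
qed

lemma tangentT0_PiT0: "tangentT0 (PiT0 z)"
  by (simp add: tangentT0_def PiT0_def sum_subtractf flip: sum_divide_distrib)

lemma PiT0_diff_const: "PiT0 (\<chi> j. z $ j - c) = PiT0 z"
  by (simp add: PiT0_def vec_eq_iff sum_subtractf diff_divide_distrib)

lemma expS_diff_const: "expS p (\<chi> j. z $ j - c) = expS p z"
proof -
  have shift: "p $ j * exp (z $ j - c) = p $ j * exp (z $ j) * exp (- c)" for j
    by (simp add: exp_diff exp_minus field_simps)
  show ?thesis
    unfolding expS_def vec_lambda_beta shift by (simp flip: sum_distrib_right)
qed

lemma expS_PiT0: "expS p (PiT0 z) = expS p z"
  using expS_diff_const[of p z "\<Sum>k\<in>UNIV. z $ k / real CARD('j)"]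
  by (simp add: PiT0_def)

lemma expS_ln_ratio:
  assumes p_pos: "\<And>j. p $ j > 0" and q: "simplexS q"
  shows "expS p (\<chi> j. ln (q $ j) - ln (p $ j)) = q"
proof -
  have q_pos: "\<And>j. q $ j > 0" and q_sum: "(\<Sum>j\<in>UNIV. q $ j) = 1"
    using q by (auto simp: simplexS_def)
  have "p $ j * exp (ln (q $ j) - ln (p $ j)) = q $ j" for j
    using p_pos[of j] q_pos[of j] by (simp add: exp_diff)
  then show ?thesis
    by (simp add: expS_def vec_eq_iff q_sum)
qed

definition lnW :: "real^'j^'i \<Rightarrow> real^'j^'i" where
  "lnW W = (\<chi> i j. ln (W $ i $ j))"

lemma tangentTT0_PiTT0: "tangentTT0 (PiTT0 Z)"
  by (simp add: tangentTT0_def PiTT0_def tangentT0_PiT0)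

lemma bounded_linear_PiTT0: "bounded_linear (PiTT0 :: real^'j::finite^'i::finite \<Rightarrow> _)"
proof -
  have "linear (PiTT0 :: real^'j^'i \<Rightarrow> _)"
    by (rule linearI)
      (simp_all add: PiTT0_def PiT0_def vec_eq_iff sum.distrib algebra_simps add_divide_distrib
        flip: sum_distrib_left sum_divide_distrib)
  then show ?thesis
    by (simp add: linear_conv_bounded_linear)
qed

lemma expW_PiTT0: "expW W (PiTT0 Z) = expW W Z"
  by (simp add: expW_def PiTT0_def expS_PiT0)

lemma expW_ln_ratio:
  assumes "assignW W0" and "assignW W"
  shows "expW W0 (lnW W - lnW W0) = W"
proof -
  have block: "(lnW W - lnW W0) $ i = (\<chi> j. ln (W $ i $ j) - ln (W0 $ i $ j))" for i
    by (simp add: lnW_def vec_eq_iff)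
  have "expW W0 (lnW W - lnW W0) $ i = W $ i" for i
    unfolding expW_def vec_lambda_beta block
    using assms by (intro expS_ln_ratio) (auto simp: assignW_def simplexS_def)
  then show ?thesis
    by (simp add: vec_eq_iff)
qed

lemma lnW_has_vector_derivative:
  assumes flow: "(W has_vector_derivative PiW (W t) Z) (at t within T)"
    and pos: "assignW (W t)"
  shows "((\<lambda>s. lnW (W s)) has_vector_derivative
      (\<chi> i j. Z $ i $ j - (\<Sum>k\<in>UNIV. W t $ i $ k * Z $ i $ k))) (at t within T)"
proof -
  have "((\<lambda>s. ln (W s $ i $ j)) has_real_derivative
      Z $ i $ j - (\<Sum>k\<in>UNIV. W t $ i $ k * Z $ i $ k)) (at t within T)" for i j
  proof (rule has_real_derivative_ln_of_relative_rate)
    show "((\<lambda>s. W s $ i $ j) has_real_derivative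
        W t $ i $ j * (Z $ i $ j - (\<Sum>k\<in>UNIV. W t $ i $ k * Z $ i $ k))) (at t within T)"
      using has_vector_derivative_vec_nth[OF has_vector_derivative_vec_nth[OF flow], of i j]
      by (simp add: has_real_derivative_iff_has_vector_derivative PiW_def Pip_def
          right_diff_distrib)
    show "W t $ i $ j > 0"
      using pos by (simp add: assignW_def simplexS_def)
  qed
  then show ?thesis
    unfolding lnW_def has_real_derivative_iff_has_vector_derivative
    by (intro vec_lambda_has_vector_derivative)
qed

lemma assignment_flow_exp_representation:
  fixes \<Phi> :: "real^'j::finite^'i::finite \<Rightarrow> real^'j^'i"
  assumes W0: "assignW W0" and W_in: "\<And>t. t \<in> T \<Longrightarrow> assignW (W t)"
    and W_flow: "\<And>t. t \<in> T \<Longrightarrow> (W has_vector_derivative PiW (W t) (\<Phi> (W t))) (at t within T)"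
    and t: "t \<in> T"
  defines "V \<equiv> \<lambda>s. PiTT0 (lnW (W s) - lnW W0)"
  shows "W t = expW W0 (V t)" and "tangentTT0 (V t)"
    and "(V has_vector_derivative PiTT0 (\<Phi> (expW W0 (V t)))) (at t within T)"
proof -
  show W_eq: "W t = expW W0 (V t)"
    by (simp add: V_def expW_PiTT0 expW_ln_ratio W0 W_in[OF t])
  show "tangentTT0 (V t)"
    by (simp add: V_def tangentTT0_PiTT0)
  have "((\<lambda>s. lnW (W s) - lnW W0) has_vector_derivative
      (\<chi> i j. \<Phi> (W t) $ i $ j - (\<Sum>k\<in>UNIV. W t $ i $ k * \<Phi> (W t) $ i $ k))) (at t within T)"
    using lnW_has_vector_derivative[OF W_flow[OF t] W_in[OF t]]
    by (rule derivative_eq_intros) simp_all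
  from bounded_linear.has_vector_derivative[OF bounded_linear_PiTT0 this]
  have "(V has_vector_derivative PiTT0 (\<Phi> (W t))) (at t within T)"
    by (simp add: V_def PiTT0_def PiT0_diff_const)
  with W_eq show "(V has_vector_derivative PiTT0 (\<Phi> (expW W0 (V t)))) (at t within T)"
    by simp
qed

theorem proposition3p1:
  fixes N :: "'i::finite \<Rightarrow> 'i set"
    and w :: "'i \<Rightarrow> 'i \<Rightarrow> real"
    and D :: "real^'j::finite^'i"
    and \<rho> :: real
    and W0 :: "real^'j^'i"
    and W :: "real \<Rightarrow> real^'j^'i"
    and T :: "real set"
  assumes N_sym: "\<And>i k. k \<in> N i \<longleftrightarrow> i \<in> N k"
    and w_pos: "\<And>i k. k \<in> N i \<Longrightarrow> w i k > 0"
    and w_sum: "\<And>i. (\<Sum>k\<in>N i. w i k) = 1"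
    and rho_pos: "\<rho> > 0"
    and W0: "assignW W0"
    and T_int: "is_interval T" and T0: "0 \<in> T"
    and W_init: "W 0 = W0"
    and W_in: "\<And>t. t \<in> T \<Longrightarrow> assignW (W t)"
    and W_flow: "\<And>t. t \<in> T \<Longrightarrow>
        (W has_vector_derivative PiW (W t) (similarity N w D \<rho> (W t))) (at t within T)"
  shows "\<exists>V :: real \<Rightarrow> real^'j^'i. V 0 = 0 \<and>
          (\<forall>t\<in>T. tangentTT0 (V t)
             \<and> (V has_vector_derivative PiTT0 (similarity N w D \<rho> (expW W0 (V t)))) (at t within T)
             \<and> W t = expW W0 (V t))"
proof (intro exI conjI ballI)
  let ?V = "\<lambda>s. PiTT0 (lnW (W s) - lnW W0)"
  show "?V 0 = 0"
    using linear_0[OF bounded_linear.linear[OF bounded_linear_PiTT0]] by (simp add: W_init)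
  fix t assume "t \<in> T"
  note representation = assignment_flow_exp_representation[OF W0 W_in W_flow this]
  show "tangentTT0 (?V t)" and "W t = expW W0 (?V t)"
    and "(?V has_vector_derivative PiTT0 (similarity N w D \<rho> (expW W0 (?V t)))) (at t within T)"
    using representation by simp_all
qed

end
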